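(* Let $S=\langle P,\varphi\rangle$ be a SUT model, $t$ a strength, $N\ge1$ an integer and $lb$ an integer with $0\le lb<CAN(t,S)$. Consider the Weighted Partial MaxSAT instance $WPMSat_{CCX}^{N,t,S,lb}$ (defined in the context) with weights $w_i$. (1) If $w_i=2^{i-(lb+2)}$ for all $i$: when $N\ge CAN(t,S)$ its optimal cost is $2^{CAN(t,S)-(lb+1)}-1$, and otherwise it is $\infty$. (2) If $w_i=i-(lb+2)+1$ for all $i$: when $N\ge CAN(t,S)$ its optimal cost is $(1+n)\cdot n/2$ where $n=CAN(t,S)-(lb+1)$, and otherwise it is $\infty$.
   Context: A SUT model is $S=\langle P,\varphi\rangle$, where $P$ is a finite set of parameters, each $p\in P$ having a finite nonempty domain $d(p)$, and $\varphi$ is a propositional formula whose atoms have the form $(p=v)$ with $p\in P$, $v\in d(p)$. A test case is a full assignment $A$ giving each $p$ a value in $d(p)$ such that $\varphi$ is true when each atom $(p=v)$ is read as true iff $A(p)=v$; it is assumed that at least one test case exists. Fix a strength $t$ with $1\le t\le|P|$. A $t$-tuple is an assignment of values to exactly $t$ distinct parameters, viewed as a set of pairs $(p,v)$; a test case covers $\tau$ if it assigns $v$ to $p$ for every $(p,v)\in\tau$. A $t$-tuple is allowed if some test case covers it; $\mathcal T_a$ is the set of allowed $t$-tuples. A covering array $CA(N;t,S)$ is a list of $N$ test cases (repetitions allowed) covering every allowed $t$-tuple; $CAN(t,S)$ is the minimum $N$ for which a $CA(N;t,S)$ exists. $[N]=\{1,\dots,N\}$. A Weighted Partial MaxSAT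 instance consists of hard constraints and soft clauses $(c,w)$ with positive integer weight $w$; its optimal cost is the minimum, over truth assignments satisfying all hard constraints, of the total weight of falsified soft clauses, and $\infty$ if the hard constraints are unsatisfiable. Variables: $x_{i,p,v}$ ($i\in[N]$, $p\in P$, $v\in d(p)$), $c^i_\tau$ ($i\in\{0,\dots,N\}$, $\tau\in\mathcal T_a$), $u_i$ ($i\in\{lb+2,\dots,N\}$). Hard constraints of $WPMSat_{CCX}^{N,t,S,lb}$: (X) for every $i\in[N]$, $p\in P$: exactly one of $\{x_{i,p,v}:v\in d(p)\}$ is true; (SUTX) for every $i\in[N]$: the formula obtained from $\varphi$ by replacing each atom $(p=v)$ with $x_{i,p,v}$; (CCX) (a) for every $i\in[N]$, $\tau\in\mathcal T_a$, $(p,v)\in\tau$: $c^i_\tau\rightarrow(c^{i-1}_\tau\vee x_{i,p,v})$; (b) for every $\tau\in\mathcal T_a$: the unit clause $c^N_\tau$; (c) for every $\tau\in\mathcal T_a$: $c^N_\tau\rightarrow\neg c^0_\tau$; (BSU) for every $i\in\{lb+2,\dots,N-1\}$: $u_{i+1}\rightarrow u_i$; (CCU) for every $i\in\{lb+2,\dots,N\}$, $\tau\in\mathcal T_a$: $\neg c^{i-1}_\tau\rightarrow u_i$. Soft clauses: $(\neg u_i,w_i)$ for every $i\in\{lb+2,\dots,N\}$. *)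

theory Defs
  imports Main "HOL-Library.Extended_Nat"
begin

datatype 'a pform =
    PAtom 'a
  | PTrue
  | PFalse
  | PNot "'a pform"
  | PAnd "'a pform" "'a pform"
  | POr "'a pform" "'a pform"
  | PImp "'a pform" "'a pform"
  | PIff "'a pform" "'a pform"

fun peval :: "('a \<Rightarrow> bool) \<Rightarrow> 'a pform \<Rightarrow> bool" where
  "peval I (PAtom a) = I a"
| "peval I PTrue = True"
| "peval I PFalse = False"
| "peval I (PNot f) = (\<not> peval I f)"
| "peval I (PAnd f g) = (peval I f \<and> peval I g)"
| "peval I (POr f g) = (peval I f \<or> peval I g)"
| "peval I (PImp f g) = (peval I f \<longrightarrow> peval I g)"
| "peval I (PIff f g) = (peval I f \<longleftrightarrow> peval I g)"

fun patoms :: "'a pform \<Rightarrow> 'a set" where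
  "patoms (PAtom a) = {a}"
| "patoms PTrue = {}"
| "patoms PFalse = {}"
| "patoms (PNot f) = patoms f"
| "patoms (PAnd f g) = patoms f \<union> patoms g"
| "patoms (POr f g) = patoms f \<union> patoms g"
| "patoms (PImp f g) = patoms f \<union> patoms g"
| "patoms (PIff f g) = patoms f \<union> patoms g"

text \<open>A SUT model is given by a parameter set P, domains d and a constraint phi
  whose atoms are pairs (p,v), read as the atom (p = v).\<close>

definition sut_model :: "'p set \<Rightarrow> ('p \<Rightarrow> 'v set) \<Rightarrow> ('p \<times> 'v) pform \<Rightarrow> bool" where
  "sut_model P d phi \<longleftrightarrow> finite P \<and> (\<forall>p\<in>P. finite (d p) \<and> d p \<noteq> {})
     \<and> patoms phi \<subseteq> Sigma P d"

definition test_case :: "'p set \<Rightarrow> ('p \<Rightarrow> 'v set) \<Rightarrow> ('p \<times> 'v) pform \<Rightarrow> ('p \<Rightarrow> 'v) \<Rightarrow> bool" where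
  "test_case P d phi A \<longleftrightarrow> (\<forall>p\<in>P. A p \<in> d p) \<and> peval (\<lambda>(p, v). A p = v) phi"

definition t_tuple :: "'p set \<Rightarrow> ('p \<Rightarrow> 'v set) \<Rightarrow> nat \<Rightarrow> ('p \<times> 'v) set \<Rightarrow> bool" where
  "t_tuple P d t tau \<longleftrightarrow> tau \<subseteq> Sigma P d \<and> finite tau \<and> inj_on fst tau \<and> card tau = t"

definition covers :: "('p \<Rightarrow> 'v) \<Rightarrow> ('p \<times> 'v) set \<Rightarrow> bool" where
  "covers A tau \<longleftrightarrow> (\<forall>(p, v)\<in>tau. A p = v)"

definition allowed_tuples :: "'p set \<Rightarrow> ('p \<Rightarrow> 'v set) \<Rightarrow> ('p \<times> 'v) pform \<Rightarrow> nat \<Rightarrow> ('p \<times> 'v) set set" where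
  "allowed_tuples P d phi t = {tau. t_tuple P d t tau \<and> (\<exists>A. test_case P d phi A \<and> covers A tau)}"

definition covering_array :: "'p set \<Rightarrow> ('p \<Rightarrow> 'v set) \<Rightarrow> ('p \<times> 'v) pform \<Rightarrow> nat \<Rightarrow> nat \<Rightarrow> ('p \<Rightarrow> 'v) list \<Rightarrow> bool" where
  "covering_array P d phi t N xs \<longleftrightarrow> length xs = N \<and> (\<forall>A\<in>set xs. test_case P d phi A)
     \<and> (\<forall>tau\<in>allowed_tuples P d phi t. \<exists>A\<in>set xs. covers A tau)"

definition CAN :: "'p set \<Rightarrow> ('p \<Rightarrow> 'v set) \<Rightarrow> ('p \<times> 'v) pform \<Rightarrow> nat \<Rightarrow> nat" where
  "CAN P d phi t = (LEAST N. \<exists>xs. covering_array P d phi t N xs)"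

datatype ('p, 'v) wvar =
    X nat 'p 'v
  | C nat "('p \<times> 'v) set"
  | U nat

definition wpms_hard :: "'p set \<Rightarrow> ('p \<Rightarrow> 'v set) \<Rightarrow> ('p \<times> 'v) pform \<Rightarrow> nat \<Rightarrow> nat \<Rightarrow> nat
    \<Rightarrow> (('p, 'v) wvar \<Rightarrow> bool) \<Rightarrow> bool" where
  "wpms_hard P d phi N t lb \<alpha> \<longleftrightarrow>
     \<comment> \<open>(X)\<close>
     (\<forall>i\<in>{1..N}. \<forall>p\<in>P. \<exists>!v. v \<in> d p \<and> \<alpha> (X i p v)) \<and>
     \<comment> \<open>(SUTX)\<close>
     (\<forall>i\<in>{1..N}. peval (\<lambda>(p, v). \<alpha> (X i p v)) phi) \<and>
     \<comment> \<open>(CCX) (a)\<close>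
     (\<forall>i\<in>{1..N}. \<forall>tau\<in>allowed_tuples P d phi t. \<forall>(p, v)\<in>tau.
         \<alpha> (C i tau) \<longrightarrow> \<alpha> (C (i - 1) tau) \<or> \<alpha> (X i p v)) \<and>
     \<comment> \<open>(CCX) (b)\<close>
     (\<forall>tau\<in>allowed_tuples P d phi t. \<alpha> (C N tau)) \<and>
     \<comment> \<open>(CCX) (c)\<close>
     (\<forall>tau\<in>allowed_tuples P d phi t. \<alpha> (C N tau) \<longrightarrow> \<not> \<alpha> (C 0 tau)) \<and>
     \<comment> \<open>(BSU)\<close>
     (\<forall>i\<in>{lb + 2..N - 1}. \<alpha> (U (i + 1)) \<longrightarrow> \<alpha> (U i)) \<and>
     \<comment> \<open>(CCU)\<close>
     (\<forall>i\<in>{lb + 2..N}. \<forall>tau\<in>allowed_tuples P d phi t. \<not> \<alpha> (C (i - 1) tau) \<longrightarrow> \<alpha> (U i))"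

text \<open>Cost: total weight of falsified soft clauses (\<not> u_i, w_i), i.e. of the true u_i.\<close>
definition wpms_cost :: "(nat \<Rightarrow> nat) \<Rightarrow> nat \<Rightarrow> nat \<Rightarrow> (('p, 'v) wvar \<Rightarrow> bool) \<Rightarrow> nat" where
  "wpms_cost w N lb \<alpha> = (\<Sum>i\<in>{lb + 2..N}. if \<alpha> (U i) then w i else 0)"

text \<open>Optimal cost; the infimum over the empty set is \<infinity>.\<close>
definition wpms_opt :: "'p set \<Rightarrow> ('p \<Rightarrow> 'v set) \<Rightarrow> ('p \<times> 'v) pform \<Rightarrow> nat \<Rightarrow> nat \<Rightarrow> nat
    \<Rightarrow> (nat \<Rightarrow> nat) \<Rightarrow> enat" where
  "wpms_opt P d phi N t lb w =
     (INF \<alpha> \<in> {\<alpha>. wpms_hard P d phi N t lb \<alpha>}. enat (wpms_cost w N lb \<alpha>))"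

end

theory Submission
  imports Defs
begin

text \<open>A model of the hard constraints encodes a list of N test cases: row i is read off the
  variables x_{i,p,v}, and by (CCX) the variable c^j_\<tau> can only be true if \<tau> is covered
  by one of the first j rows. Hence if every c^j_\<tau> is true, the first j rows form a covering
  array and CAN(t,S) \<le> j. Applied to j = N this shows infeasibility for N < CAN(t,S); applied
  via (CCU) to j = CAN(t,S) - 1 it forces u_{CAN(t,S)}, and then (BSU) forces all u_i with
  i \<le> CAN(t,S). Conversely, a covering array of size CAN(t,S), padded with arbitrary test cases,
  yields a model in which exactly these u_i are true. So for arbitrary weights the optimum is
  w_{lb+2} + ... + w_{CAN(t,S)}, and the two formulas are its closed forms.\<close>

lemma peval_cong: "(\<And>a. a \<in> patoms f \<Longrightarrow> I a = J a) \<Longrightarrow> peval I f = peval J f"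
  by (induction f) auto

lemma finite_allowed_tuples:
  assumes "sut_model P d phi"
  shows "finite (allowed_tuples P d phi t)"
proof -
  have "finite (Sigma P d)"
    using assms unfolding sut_model_def by (intro finite_SigmaI) auto
  moreover have "allowed_tuples P d phi t \<subseteq> Pow (Sigma P d)"
    unfolding allowed_tuples_def t_tuple_def by auto
  ultimately show ?thesis
    by (meson finite_Pow_iff finite_subset)
qed

lemma covering_array_exists:
  assumes "sut_model P d phi"
  shows "\<exists>N xs. covering_array P d phi t N xs"
proof -
  obtain L where L: "set L = allowed_tuples P d phi t"
    using finite_allowed_tuples[OF assms] finite_list by blast
  define f where "f \<tau> = (SOME A. test_case P d phi A \<and> covers A \<tau>)" for \<tau>
  have f: "test_case P d phi (f \<tau>) \<and> covers (f \<tau>) \<tau>" if "\<tau> \<in> allowed_tuples P d phi t" for \<tau>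
  proof -
    have "\<exists>A. test_case P d phi A \<and> covers A \<tau>"
      using that unfolding allowed_tuples_def by auto
    then show ?thesis unfolding f_def by (rule someI_ex)
  qed
  have "covering_array P d phi t (length (map f L)) (map f L)"
    unfolding covering_array_def using f L by auto
  then show ?thesis by blast
qed

lemma CAN_le: "covering_array P d phi t N xs \<Longrightarrow> CAN P d phi t \<le> N"
  unfolding CAN_def by (rule Least_le) blast

lemma covering_array_CAN:
  "sut_model P d phi \<Longrightarrow> \<exists>xs. covering_array P d phi t (CAN P d phi t) xs"
  unfolding CAN_def by (rule LeastI_ex) (use covering_array_exists in blast)

lemma wpms_hardD:
  assumes "wpms_hard P d phi N t lb \<alpha>" and "\<tau> \<in> allowed_tuples P d phi t"
  shows wpms_hard_C_N: "\<alpha> (C N \<tau>)"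
    and wpms_hard_not_C_0: "\<not> \<alpha> (C 0 \<tau>)"
    and wpms_hard_C_step: "\<lbrakk>i \<in> {1..N}; (p, v) \<in> \<tau>; \<alpha> (C i \<tau>); \<not> \<alpha> (C (i - 1) \<tau>)\<rbrakk> \<Longrightarrow> \<alpha> (X i p v)"
    and wpms_hard_U_of_not_C: "\<lbrakk>i \<in> {lb + 2..N}; \<not> \<alpha> (C (i - 1) \<tau>)\<rbrakk> \<Longrightarrow> \<alpha> (U i)"
  using assms unfolding wpms_hard_def by fast+

lemma wpms_hard_U_mono:
  "\<lbrakk>wpms_hard P d phi N t lb \<alpha>; lb + 2 \<le> i; i < N; \<alpha> (U (Suc i))\<rbrakk> \<Longrightarrow> \<alpha> (U i)"
  unfolding wpms_hard_def by simp

definition wpms_row :: "(('p, 'v) wvar \<Rightarrow> bool) \<Rightarrow> ('p \<Rightarrow> 'v set) \<Rightarrow> nat \<Rightarrow> 'p \<Rightarrow> 'v" where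
  "wpms_row \<alpha> d i p = (THE v. v \<in> d p \<and> \<alpha> (X i p v))"

lemma
  assumes "wpms_hard P d phi N t lb \<alpha>" and "i \<in> {1..N}" and "p \<in> P"
  shows wpms_row_in_domain: "wpms_row \<alpha> d i p \<in> d p"
    and wpms_hard_X_iff: "v \<in> d p \<Longrightarrow> \<alpha> (X i p v) \<longleftrightarrow> wpms_row \<alpha> d i p = v"
proof -
  have "\<exists>!v. v \<in> d p \<and> \<alpha> (X i p v)"
    using assms unfolding wpms_hard_def by blast
  from theI'[OF this] this
  show "wpms_row \<alpha> d i p \<in> d p" and "v \<in> d p \<Longrightarrow> \<alpha> (X i p v) \<longleftrightarrow> wpms_row \<alpha> d i p = v"
    unfolding wpms_row_def by blast+
qed

lemma test_case_wpms_row: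
  assumes "sut_model P d phi" and hard: "wpms_hard P d phi N t lb \<alpha>" and i: "i \<in> {1..N}"
  shows "test_case P d phi (wpms_row \<alpha> d i)"
proof -
  have "peval (\<lambda>(p, v). \<alpha> (X i p v)) phi"
    using hard i unfolding wpms_hard_def by blast
  moreover have "peval (\<lambda>(p, v). \<alpha> (X i p v)) phi = peval (\<lambda>(p, v). wpms_row \<alpha> d i p = v) phi"
  proof (rule peval_cong)
    fix a assume "a \<in> patoms phi"
    then have "a \<in> Sigma P d"
      using assms(1) unfolding sut_model_def by blast
    then show "(\<lambda>(p, v). \<alpha> (X i p v)) a = (\<lambda>(p, v). wpms_row \<alpha> d i p = v) a"
      using wpms_hard_X_iff[OF hard i] by auto
  qed
  ultimately show ?thesis
    unfolding test_case_def using wpms_row_in_domain[OF hard i] by auto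
qed

text \<open>By (CCX), the least j with c^j_\<tau> true has all x_{j,p,v}, (p,v) \<in> \<tau>, true.\<close>
lemma wpms_hard_C_covered:
  assumes hard: "wpms_hard P d phi N t lb \<alpha>" and tau: "\<tau> \<in> allowed_tuples P d phi t"
  shows "j \<le> N \<Longrightarrow> \<alpha> (C j \<tau>) \<Longrightarrow> \<exists>i\<in>{1..j}. covers (wpms_row \<alpha> d i) \<tau>"
proof (induction j)
  case 0
  then show ?case using wpms_hard_not_C_0[OF hard tau] by simp
next
  case (Suc j)
  show ?case
  proof (cases "\<alpha> (C j \<tau>)")
    case True
    then show ?thesis using Suc by fastforce
  next
    case False
    have i: "Suc j \<in> {1..N}"
      using Suc.prems by simp
    have "wpms_row \<alpha> d (Suc j) p = v" if pv: "(p, v) \<in> \<tau>" for p v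
    proof -
      have "(p, v) \<in> Sigma P d"
        using tau pv unfolding allowed_tuples_def t_tuple_def by blast
      then show ?thesis
        using wpms_hard_C_step[OF hard tau i pv] Suc.prems False wpms_hard_X_iff[OF hard i] by auto
    qed
    then have "covers (wpms_row \<alpha> d (Suc j)) \<tau>"
      unfolding covers_def by blast
    then show ?thesis by auto
  qed
qed

lemma CAN_le_of_wpms_hard:
  assumes "sut_model P d phi" and hard: "wpms_hard P d phi N t lb \<alpha>" and "j \<le> N"
    and "\<forall>\<tau>\<in>allowed_tuples P d phi t. \<alpha> (C j \<tau>)"
  shows "CAN P d phi t \<le> j"
proof (rule CAN_le)
  show "covering_array P d phi t j (map (wpms_row \<alpha> d) [1..<j+1])"
    unfolding covering_array_def
    using assms test_case_wpms_row[OF assms(1) hard] wpms_hard_C_covered[OF hard] by fastforce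
qed

lemma CAN_le_of_wpms_hard_N:
  "sut_model P d phi \<Longrightarrow> wpms_hard P d phi N t lb \<alpha> \<Longrightarrow> CAN P d phi t \<le> N"
  using CAN_le_of_wpms_hard[of P d phi N t lb \<alpha> N] wpms_hard_C_N by blast

lemma wpms_hard_U:
  assumes sm: "sut_model P d phi" and hard: "wpms_hard P d phi N t lb \<alpha>"
    and i: "lb + 2 \<le> i" "i \<le> CAN P d phi t"
  shows "\<alpha> (U i)"
  using i(2)
proof (induction rule: inc_induct)
  case base
  have KN: "CAN P d phi t \<le> N"
    using CAN_le_of_wpms_hard_N[OF sm hard] .
  then have K: "CAN P d phi t \<in> {lb + 2..N}"
    using i by simp
  show ?case
  proof (rule ccontr)
    assume "\<not> \<alpha> (U (CAN P d phi t))"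
    then have "\<forall>\<tau>\<in>allowed_tuples P d phi t. \<alpha> (C (CAN P d phi t - 1) \<tau>)"
      using wpms_hard_U_of_not_C[OF hard _ K] by blast
    from CAN_le_of_wpms_hard[OF sm hard _ this] KN i show False by linarith
  qed
next
  case (step n)
  then show ?case
    using wpms_hard_U_mono[OF hard] CAN_le_of_wpms_hard_N[OF sm hard] i by simp
qed

lemma wpms_cost_lower:
  assumes "sut_model P d phi" and "wpms_hard P d phi N t lb \<alpha>"
  shows "(\<Sum>i = lb + 2..CAN P d phi t. w i) \<le> wpms_cost w N lb \<alpha>"
proof -
  have "(\<Sum>i = lb + 2..CAN P d phi t. w i) = (\<Sum>i = lb + 2..CAN P d phi t. if \<alpha> (U i) then w i else 0)"
    using wpms_hard_U[OF assms] by (intro sum.cong) auto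
  also have "\<dots> \<le> (\<Sum>i = lb + 2..N. if \<alpha> (U i) then w i else 0)"
    using CAN_le_of_wpms_hard_N[OF assms] by (intro sum_mono2) auto
  finally show ?thesis unfolding wpms_cost_def .
qed

definition rows_assignment :: "(nat \<Rightarrow> 'p \<Rightarrow> 'v) \<Rightarrow> nat \<Rightarrow> ('p, 'v) wvar \<Rightarrow> bool" where
  "rows_assignment R K x = (case x of
       X i p v \<Rightarrow> R i p = v
     | C i \<tau> \<Rightarrow> (\<exists>j\<in>{1..i}. covers (R j) \<tau>)
     | U i \<Rightarrow> i \<le> K)"

lemma rows_assignment_simps [simp]:
  "rows_assignment R K (X i p v) \<longleftrightarrow> R i p = v"
  "rows_assignment R K (C i \<tau>) \<longleftrightarrow> (\<exists>j\<in>{1..i}. covers (R j) \<tau>)"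
  "rows_assignment R K (U i) \<longleftrightarrow> i \<le> K"
  by (simp_all add: rows_assignment_def)

lemma rows_assignment_C_step:
  assumes "(p, v) \<in> \<tau>" and "rows_assignment R K (C i \<tau>)" and "\<not> rows_assignment R K (C (i - 1) \<tau>)"
  shows "rows_assignment R K (X i p v)"
proof -
  obtain j where j: "j \<in> {1..i}" "covers (R j) \<tau>"
    using assms(2) by auto
  with assms(3) have "j = i"
    by (cases "j = i") auto
  with j assms(1) show ?thesis
    unfolding covers_def by auto
qed

lemma wpms_hard_rows_assignment:
  assumes rows: "\<And>i. i \<in> {1..N} \<Longrightarrow> test_case P d phi (R i)"
    and cov: "\<And>\<tau>. \<tau> \<in> allowed_tuples P d phi t \<Longrightarrow> \<exists>j\<in>{1..K}. covers (R j) \<tau>"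
    and KN: "K \<le> N"
  shows "wpms_hard P d phi N t lb (rows_assignment R K)"
proof -
  let ?\<alpha> = "rows_assignment R K"
  have C: "?\<alpha> (C i \<tau>)" if "\<tau> \<in> allowed_tuples P d phi t" "K \<le> i" for i \<tau>
    using cov[OF that(1)] that(2) by force
  have X: "\<forall>i\<in>{1..N}. \<forall>p\<in>P. \<exists>!v. v \<in> d p \<and> ?\<alpha> (X i p v)"
  proof (intro ballI)
    fix i p assume "i \<in> {1..N}" "p \<in> P"
    then have "R i p \<in> d p"
      using rows unfolding test_case_def by blast
    then show "\<exists>!v. v \<in> d p \<and> ?\<alpha> (X i p v)" by auto
  qed
  have SUTX: "\<forall>i\<in>{1..N}. peval (\<lambda>(p, v). ?\<alpha> (X i p v)) phi"
    using rows unfolding test_case_def by simp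
  have "?\<alpha> (X i p v)" if "(p, v) \<in> \<tau>" "?\<alpha> (C i \<tau>)" "\<not> ?\<alpha> (C (i - 1) \<tau>)" for i \<tau> p v
    by (rule rows_assignment_C_step[OF that])
  then have CCXa: "\<forall>i\<in>{1..N}. \<forall>\<tau>\<in>allowed_tuples P d phi t. \<forall>(p, v)\<in>\<tau>.
      ?\<alpha> (C i \<tau>) \<longrightarrow> ?\<alpha> (C (i - 1) \<tau>) \<or> ?\<alpha> (X i p v)"
    by blast
  have CCXb: "\<forall>\<tau>\<in>allowed_tuples P d phi t. ?\<alpha> (C N \<tau>)"
    using C KN by blast
  have CCXc: "\<forall>\<tau>\<in>allowed_tuples P d phi t. ?\<alpha> (C N \<tau>) \<longrightarrow> \<not> ?\<alpha> (C 0 \<tau>)"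
    by simp
  have BSU: "\<forall>i\<in>{lb + 2..N - 1}. ?\<alpha> (U (i + 1)) \<longrightarrow> ?\<alpha> (U i)"
    by simp
  have CCU: "\<forall>i\<in>{lb + 2..N}. \<forall>\<tau>\<in>allowed_tuples P d phi t. \<not> ?\<alpha> (C (i - 1) \<tau>) \<longrightarrow> ?\<alpha> (U i)"
  proof (intro ballI impI)
    fix i \<tau> assume "\<tau> \<in> allowed_tuples P d phi t" "\<not> ?\<alpha> (C (i - 1) \<tau>)"
    then have "\<not> K \<le> i - 1"
      using C by blast
    then show "?\<alpha> (U i)" by simp
  qed
  show ?thesis
    unfolding wpms_hard_def by (intro conjI X SUTX CCXa CCXb CCXc BSU CCU)
qed

lemma wpms_cost_rows_assignment:
  assumes "K \<le> N"
  shows "wpms_cost w N lb (rows_assignment R K) = (\<Sum>i = lb + 2..K. w i)"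
proof -
  have "wpms_cost w N lb (rows_assignment R K) = (\<Sum>i \<in> {lb + 2..N} \<inter> {..K}. w i)"
    unfolding wpms_cost_def rows_assignment_simps atMost_iff[of _ K, symmetric]
    by (rule sum.inter_restrict[symmetric]) simp
  also have "{lb + 2..N} \<inter> {..K} = {lb + 2..K}"
    using assms by auto
  finally show ?thesis .
qed

lemma wpms_hard_padded_covering_array:
  assumes xs: "covering_array P d phi t K xs" and A0: "test_case P d phi A0" and KN: "K \<le> N"
  shows "wpms_hard P d phi N t lb (rows_assignment (\<lambda>i. (xs @ replicate N A0) ! (i - 1)) K)"
proof (rule wpms_hard_rows_assignment[OF _ _ KN])
  fix i :: nat assume "i \<in> {1..N}"
  then have "(xs @ replicate N A0) ! (i - 1) \<in> set xs \<union> {A0}"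
    using xs nth_mem[of "i - 1" "xs @ replicate N A0"] by (auto simp: covering_array_def)
  then show "test_case P d phi ((xs @ replicate N A0) ! (i - 1))"
    using xs A0 unfolding covering_array_def by auto
next
  fix \<tau> assume "\<tau> \<in> allowed_tuples P d phi t"
  then obtain k where k: "k < K" "covers (xs ! k) \<tau>"
    using xs unfolding covering_array_def by (metis in_set_conv_nth)
  moreover have "(xs @ replicate N A0) ! (Suc k - 1) = xs ! k"
    using xs k unfolding covering_array_def by (simp add: nth_append)
  ultimately show "\<exists>j\<in>{1..K}. covers ((xs @ replicate N A0) ! (j - 1)) \<tau>"
    by (intro bexI[of _ "Suc k"]) auto
qed

lemma wpms_opt_eq_sum_weights:
  assumes sm: "sut_model P d phi" and A0: "test_case P d phi A0"
  shows "wpms_opt P d phi N t lb w =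
     (if CAN P d phi t \<le> N then enat (\<Sum>i = lb + 2..CAN P d phi t. w i) else \<infinity>)"
proof (cases "CAN P d phi t \<le> N")
  case False
  then have "{\<alpha>. wpms_hard P d phi N t lb \<alpha>} = {}"
    using CAN_le_of_wpms_hard_N[OF sm] by blast
  then show ?thesis
    using False unfolding wpms_opt_def by (metis INF_empty top_enat_def)
next
  case True
  define K where "K = CAN P d phi t"
  obtain xs where "covering_array P d phi t K xs"
    using covering_array_CAN[OF sm] K_def by blast
  from wpms_hard_padded_covering_array[OF this A0] True
  obtain \<alpha> where "wpms_hard P d phi N t lb \<alpha>" "wpms_cost w N lb \<alpha> = (\<Sum>i = lb + 2..K. w i)"
    using wpms_cost_rows_assignment K_def by blast
  then have "wpms_opt P d phi N t lb w \<le> enat (\<Sum>i = lb + 2..K. w i)"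
    unfolding wpms_opt_def by (metis INF_lower mem_Collect_eq)
  moreover have "enat (\<Sum>i = lb + 2..K. w i) \<le> wpms_opt P d phi N t lb w"
    unfolding wpms_opt_def K_def using wpms_cost_lower[OF sm] by (intro INF_greatest) auto
  ultimately show ?thesis
    using True K_def by simp
qed

lemma sum_shift_interval: "(\<Sum>i = Suc m..m + n. f (i - Suc m)) = (\<Sum>k<n. f k)"
proof -
  have "(\<Sum>i = Suc m..m + n. f (i - Suc m)) = (\<Sum>k = 0..<n. f k)"
    by (rule sum.reindex_bij_witness[where i="\<lambda>k. k + Suc m" and j="\<lambda>i. i - Suc m"]) auto
  then show ?thesis by (simp add: atLeast0LessThan)
qed

lemma gauss_sum_lessThan_Suc: "(\<Sum>k<n. k + 1) = (1 + n) * n div (2::nat)"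
proof -
  have "(\<Sum>k<n. k + 1) = (\<Sum>k\<le>n. k)"
    by (induction n) auto
  then show ?thesis
    using gauss_sum_nat[of n] by (simp add: atLeast0AtMost mult.commute)
qed

theorem proposition5:
  fixes P :: "'p set" and d :: "'p \<Rightarrow> 'v set" and phi :: "('p \<times> 'v) pform"
    and t N lb :: nat
  assumes "sut_model P d phi"
    and "\<exists>A. test_case P d phi A"
    and "1 \<le> t" and "t \<le> card P"
    and "1 \<le> N"
    and "lb < CAN P d phi t"
  shows "wpms_opt P d phi N t lb (\<lambda>i. 2 ^ (i - (lb + 2))) =
           (if CAN P d phi t \<le> N then enat (2 ^ (CAN P d phi t - (lb + 1)) - 1) else \<infinity>)
    \<and> wpms_opt P d phi N t lb (\<lambda>i. i - (lb + 2) + 1) =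
           (let n = CAN P d phi t - (lb + 1) in
              if CAN P d phi t \<le> N then enat ((1 + n) * n div 2) else \<infinity>)"
proof -
  obtain A0 where A0: "test_case P d phi A0"
    using assms(2) by blast
  define n where "n = CAN P d phi t - (lb + 1)"
  have CAN: "CAN P d phi t = lb + 1 + n"
    using assms(6) n_def by simp
  have "(\<Sum>i = lb + 2..CAN P d phi t. (2::nat) ^ (i - (lb + 2))) = 2 ^ n - 1"
    using sum_shift_interval[where m = "lb + 1" and n = n and f = "\<lambda>k. (2::nat) ^ k"] sum_power2[of n]
    by (simp add: CAN atLeast0LessThan)
  moreover have "(\<Sum>i = lb + 2..CAN P d phi t. i - (lb + 2) + 1) = (1 + n) * n div 2"
    using sum_shift_interval[where m = "lb + 1" and n = n and f = "\<lambda>k. k + 1"] gauss_sum_lessThan_Suc[of n]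
    by (simp add: CAN)
  ultimately show ?thesis
    unfolding wpms_opt_eq_sum_weights[OF assms(1) A0] Let_def n_def[symmetric] by simp
qed

end
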